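(* Let $p\ge1$ and let $G_1,G_2$ be finite discrete probability measures on $\mathbb{R}^d\times S_d^{++}(\mathbb{R})$. Suppose that for every $(\mu_0,\Sigma_0)\in\mathbb{R}^d\times S_d^{++}(\mathbb{R})$, $$\int d((\mu_1,\Sigma_1),(\mu_0,\Sigma_0))^p\,dG_1(\mu_1,\Sigma_1)<\infty\quad\text{and}\quad\int d((\mu_0,\Sigma_0),(\mu_2,\Sigma_2))^p\,dG_2(\mu_2,\Sigma_2)<\infty,$$ where $d((\mu_1,\Sigma_1),(\mu_2,\Sigma_2))=\sqrt{\|\mu_1-\mu_2\|_2^2+0.25\,\log(\lambda_{\max}(\Sigma_1,\Sigma_2))^2}$ and $\lambda_{\max}(\Sigma_1,\Sigma_2)$ is the largest eigenvalue $\lambda$ of the generalized eigenvalue problem $\Sigma_1u=\lambda\Sigma_2u$. Then $\text{SMix-}W_p^p(G_1,G_2)<\infty$.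
   Context: $S_d^{++}(\mathbb{R})$ is the set of $d\times d$ real symmetric positive definite matrices. Let $\mathbb{S}=\{w\in\mathbb{R}^2:\|w\|_2=1\}$ and $\mathbb{S}^{d-1}=\{v\in\mathbb{R}^d:\|v\|_2=1\}$, with $\mathcal{U}(\cdot)$ the uniform distribution. For $v\in\mathbb{S}^{d-1}$ and $w=(w_1,w_2)\in\mathbb{S}$ set $P_{v,w}(\mu,\Sigma)=w_1\langle v,\mu\rangle+w_2\log\big(\sqrt{v^\top\Sigma v}\big)$. For finite discrete probability measures $G_1,G_2$ on $\mathbb{R}^d\times S_d^{++}(\mathbb{R})$ the sliced mixture Wasserstein distance is $$\text{SMix-}W_p^p(G_1,G_2)=\mathbb{E}_{(w,v)\sim\mathcal{U}(\mathbb{S})\otimes\mathcal{U}(\mathbb{S}^{d-1})}\big[W_p^p(P_{v,w}\sharp G_1,P_{v,w}\sharp G_2)\big],$$ where $\sharp$ denotes push-forward and $W_p^p(\alpha,\beta)=\inf_{\pi\in\Pi(\alpha,\beta)}\int|x-y|^p\,d\pi(x,y)$ is the $p$-th power of the Wasserstein-$p$ distance between probability measures on $\mathbb{R}$. *)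

theory Defs
  imports "HOL-Probability.Probability"
begin

definition spd :: "real^'n^'n \<Rightarrow> bool" where
  "spd A \<longleftrightarrow> transpose A = A \<and> (\<forall>x. x \<noteq> 0 \<longrightarrow> x \<bullet> (A *v x) > 0)"

definition finite_discrete_mix :: "((real^'n) \<times> (real^'n^'n)) pmf \<Rightarrow> bool" where
  "finite_discrete_mix G \<longleftrightarrow> finite (set_pmf G) \<and> (\<forall>(m,S)\<in>set_pmf G. spd S)"

definition lambda_max :: "real^'n^'n \<Rightarrow> real^'n^'n \<Rightarrow> real" where
  "lambda_max S1 S2 = Max {l. \<exists>u. u \<noteq> 0 \<and> S1 *v u = l *\<^sub>R (S2 *v u)}"

definition mix_dist :: "(real^'n) \<times> (real^'n^'n) \<Rightarrow> (real^'n) \<times> (real^'n^'n) \<Rightarrow> real" where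
  "mix_dist a b = (case a of (m1,S1) \<Rightarrow> case b of (m2,S2) \<Rightarrow>
      sqrt ((norm (m1 - m2))\<^sup>2 + 0.25 * (ln (lambda_max S1 S2))\<^sup>2))"

(* Uniform distribution on the unit sphere: push-forward of the uniform distribution
   on the unit ball under radial projection x \<mapsto> x / |x| (cone measure = normalized
   surface measure). *)
definition unif_sphere :: "'a::euclidean_space measure" where
  "unif_sphere = distr (uniform_measure lborel (ball 0 1)) borel (\<lambda>x. x /\<^sub>R norm x)"

definition proj_vw :: "real^'n \<Rightarrow> real^2 \<Rightarrow> (real^'n) \<times> (real^'n^'n) \<Rightarrow> real" where
  "proj_vw v w x = (case x of (m,S) \<Rightarrow> w$1 * (v \<bullet> m) + w$2 * ln (sqrt (v \<bullet> (S *v v))))"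

definition wass_pp :: "real \<Rightarrow> real pmf \<Rightarrow> real pmf \<Rightarrow> real" where
  "wass_pp p \<alpha> \<beta> = Inf {measure_pmf.expectation \<pi> (\<lambda>(x,y). \<bar>x - y\<bar> powr p) | \<pi>.
      map_pmf fst \<pi> = \<alpha> \<and> map_pmf snd \<pi> = \<beta>}"

definition smix_wpp :: "real \<Rightarrow> ((real^'n) \<times> (real^'n^'n)) pmf \<Rightarrow> ((real^'n) \<times> (real^'n^'n)) pmf \<Rightarrow> ennreal" where
  "smix_wpp p G1 G2 = (\<integral>\<^sup>+ (w,v). ennreal (wass_pp p (map_pmf (proj_vw v w) G1) (map_pmf (proj_vw v w) G2))
      \<partial>(unif_sphere \<Otimes>\<^sub>M unif_sphere))"

end

theory Submission
  imports Defs
begin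

text \<open>For an atom (m, S) with S positive definite, the projection P_{v,w}(m, S) is a continuous
function of the direction (w, v) on the compact product of spheres, hence bounded; finitely many
atoms therefore share one bound C. The independent coupling of the two projected measures moves
every unit of mass by at most 2C, so each sliced term W_p^p is at most (2C)^p, and so is its
average over the probability measure of directions.\<close>

lemma prob_space_unif_sphere: "prob_space (unif_sphere :: 'a::euclidean_space measure)"
proof -
  have "measure lborel (ball (0::'a) 1) > 0"
    using content_ball_pos[of 1 "0::'a"] by simp
  then have "emeasure lborel (ball (0::'a) 1) \<noteq> 0"
    by (metis measure_def enn2real_0 less_irrefl)
  then have "prob_space (uniform_measure lborel (ball (0::'a) 1))"
    using emeasure_lborel_ball_finite[of "0::'a" 1] by (intro prob_space_uniform_measure) auto
  then show ?thesis
    unfolding unif_sphere_def by (intro prob_space.prob_space_distr) auto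
qed

lemma AE_unif_sphere: "AE x in (unif_sphere :: 'a::euclidean_space measure). norm x = 1"
  unfolding unif_sphere_def
proof (subst AE_distr_iff)
  show "(\<lambda>x. x /\<^sub>R norm x) \<in> uniform_measure lborel (ball (0::'a) 1) \<rightarrow>\<^sub>M borel" by simp
  show "{x \<in> space borel. norm (x::'a) = 1} \<in> sets borel" by measurable
  show "AE x in uniform_measure lborel (ball (0::'a) 1). norm (x /\<^sub>R norm x) = 1"
    by (intro AE_uniform_measureI) (auto intro: AE_mp[OF AE_lborel_singleton[of 0]])
qed

lemma AE_pair_unif_sphere:
  "AE z in (unif_sphere :: 'a::euclidean_space measure) \<Otimes>\<^sub>M (unif_sphere :: 'b::euclidean_space measure).
     norm (fst z) = 1 \<and> norm (snd z) = 1"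
proof -
  interpret pair_sigma_finite "unif_sphere :: 'a measure" "unif_sphere :: 'b measure"
    by (simp add: pair_sigma_finite_def prob_space_imp_sigma_finite prob_space_unif_sphere)
  have "{z \<in> space ((unif_sphere :: 'a measure) \<Otimes>\<^sub>M (unif_sphere :: 'b measure)).
      norm (fst z) = 1 \<and> norm (snd z) = 1} \<in> sets (unif_sphere \<Otimes>\<^sub>M unif_sphere)"
    unfolding unif_sphere_def by measurable
  moreover have "AE x in (unif_sphere :: 'a measure). AE y in (unif_sphere :: 'b measure).
      norm x = 1 \<and> norm y = 1"
    by (rule AE_mp[OF AE_unif_sphere], rule AE_I2) (auto intro: AE_mp[OF AE_unif_sphere])
  ultimately show ?thesis
    using AE_pair_iff[of "\<lambda>x y. norm x = 1 \<and> norm y = 1"] by simp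
qed

lemma smix_wpp_le:
  fixes G1 G2 :: "((real^'n) \<times> (real^'n^'n)) pmf"
  assumes "\<And>w v. norm w = 1 \<Longrightarrow> norm v = 1 \<Longrightarrow>
      wass_pp p (map_pmf (proj_vw v w) G1) (map_pmf (proj_vw v w) G2) \<le> K"
  shows "smix_wpp p G1 G2 \<le> ennreal K"
proof -
  interpret prob_space "(unif_sphere :: (real^2) measure) \<Otimes>\<^sub>M (unif_sphere :: (real^'n) measure)"
    by (intro prob_space_pair prob_space_unif_sphere)
  have "smix_wpp p G1 G2 \<le> (\<integral>\<^sup>+ z. ennreal K
      \<partial>((unif_sphere :: (real^2) measure) \<Otimes>\<^sub>M (unif_sphere :: (real^'n) measure)))"
    unfolding smix_wpp_def
    by (intro nn_integral_mono_AE, rule AE_mp[OF AE_pair_unif_sphere])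
      (auto intro!: ennreal_leI assms)
  also have "\<dots> = ennreal K" using emeasure_space_1 by simp
  finally show ?thesis .
qed

lemma bounded_proj_vw:
  assumes "spd S"
  shows "bounded ((\<lambda>(w, v). proj_vw v w (m, S)) ` (sphere (0::real^2) 1 \<times> sphere (0::real^'n) 1))"
proof -
  let ?K = "sphere (0::real^2) 1 \<times> sphere (0::real^'n) 1"
  let ?f = "\<lambda>z::(real^2) \<times> (real^'n).
    fst z $ 1 * (snd z \<bullet> m) + fst z $ 2 * ln (sqrt (snd z \<bullet> (S *v snd z)))"
  have "sqrt (snd z \<bullet> (S *v snd z)) \<noteq> 0" if "z \<in> ?K" for z
  proof -
    have "snd z \<noteq> 0" using that by auto
    then show ?thesis using assms unfolding spd_def by (metis less_irrefl real_sqrt_eq_zero_cancel_iff)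
  qed
  moreover have "continuous_on ?K (\<lambda>z. S *v snd z)"
    by (intro continuous_on_compose2[OF matrix_vector_mult_linear_continuous_on] continuous_intros)
      auto
  ultimately have "continuous_on ?K ?f"
    by (intro continuous_intros) auto
  then have "bounded (?f ` ?K)"
    by (intro compact_imp_bounded compact_continuous_image compact_Times) auto
  moreover have "(\<lambda>(w, v). proj_vw v w (m, S)) = ?f"
    by (auto simp: proj_vw_def fun_eq_iff)
  ultimately show ?thesis by simp
qed

lemma wass_pp_le_coupling:
  assumes "map_pmf fst \<pi> = \<alpha>" and "map_pmf snd \<pi> = \<beta>"
  shows "wass_pp p \<alpha> \<beta> \<le> measure_pmf.expectation \<pi> (\<lambda>(x, y). \<bar>x - y\<bar> powr p)"
  unfolding wass_pp_def
proof (rule cInf_lower)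
  show "bdd_below {measure_pmf.expectation \<pi> (\<lambda>(x, y). \<bar>x - y\<bar> powr p) | \<pi>.
      map_pmf fst \<pi> = \<alpha> \<and> map_pmf snd \<pi> = \<beta>}"
    by (rule bdd_belowI[of _ 0]) (auto intro!: Bochner_Integration.integral_nonneg)
qed (use assms in auto)

lemma wass_pp_le_bounded_support:
  fixes \<alpha> \<beta> :: "real pmf"
  assumes "p \<ge> 0" and "\<forall>x\<in>set_pmf \<alpha>. \<bar>x\<bar> \<le> C" and "\<forall>y\<in>set_pmf \<beta>. \<bar>y\<bar> \<le> C"
  shows "wass_pp p \<alpha> \<beta> \<le> (2 * C) powr p"
proof -
  let ?c = "\<lambda>(x, y). \<bar>x - y\<bar> powr p"
  have bound: "AE z in measure_pmf (pair_pmf \<alpha> \<beta>). ?c z \<le> (2 * C) powr p"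
  proof (rule AE_pmfI)
    fix z assume "z \<in> set_pmf (pair_pmf \<alpha> \<beta>)"
    then obtain x y where "z = (x, y)" "\<bar>x - y\<bar> \<le> 2 * C"
      using assms(2,3) by (fastforce simp: set_pair_pmf)
    then show "?c z \<le> (2 * C) powr p" using assms(1) by (simp add: powr_mono2)
  qed
  have "wass_pp p \<alpha> \<beta> \<le> measure_pmf.expectation (pair_pmf \<alpha> \<beta>) ?c"
    by (rule wass_pp_le_coupling) (simp_all add: map_fst_pair_pmf map_snd_pair_pmf)
  moreover have "integrable (measure_pmf (pair_pmf \<alpha> \<beta>)) ?c"
    using bound
    by (intro measure_pmf.integrable_const_bound[where B="(2 * C) powr p"])
      (auto elim!: eventually_mono)
  ultimately show ?thesis
    using bound measure_pmf.integral_le_const order_trans by blast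
qed

lemma proj_vw_uniform_bound:
  fixes A :: "((real^'n) \<times> (real^'n^'n)) set"
  assumes "finite A" and "\<forall>(m, S)\<in>A. spd S"
  obtains C where "\<And>a w v. a \<in> A \<Longrightarrow> norm w = 1 \<Longrightarrow> norm v = 1 \<Longrightarrow> \<bar>proj_vw v w a\<bar> \<le> C"
proof -
  let ?K = "sphere (0::real^2) 1 \<times> sphere (0::real^'n) 1"
  let ?P = "\<Union>a\<in>A. (\<lambda>(w, v). proj_vw v w a) ` ?K"
  have "bounded ?P"
  proof (intro bounded_UN ballI)
    fix a assume "a \<in> A"
    then have "spd (snd a)" using assms(2) by auto
    then show "bounded ((\<lambda>(w, v). proj_vw v w a) ` ?K)"
      using bounded_proj_vw[of "snd a" "fst a"] by simp
  qed (rule assms(1))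
  then obtain C where bound: "\<forall>x\<in>?P. \<bar>x\<bar> \<le> C" unfolding bounded_real by blast
  show thesis
  proof (rule that, rule bspec[OF bound])
    fix a and w :: "real^2" and v :: "real^'n"
    assume "a \<in> A" "norm w = 1" "norm v = 1"
    then show "proj_vw v w a \<in> ?P"
      by (intro UN_I[of a] image_eqI[where x="(w, v)"]) auto
  qed
qed

theorem proposition3:
  fixes p :: real
    and G1 G2 :: "((real^'n) \<times> (real^'n^'n)) pmf"
  assumes "p \<ge> 1"
    and "finite_discrete_mix G1" and "finite_discrete_mix G2"
    and "\<And>m0 S0. spd S0 \<Longrightarrow>
           (\<integral>\<^sup>+ x. ennreal (mix_dist x (m0,S0) powr p) \<partial>(measure_pmf G1)) < \<infinity>"
    and "\<And>m0 S0. spd S0 \<Longrightarrow>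
           (\<integral>\<^sup>+ x. ennreal (mix_dist (m0,S0) x powr p) \<partial>(measure_pmf G2)) < \<infinity>"
  shows "smix_wpp p G1 G2 < \<infinity>"
proof -
  let ?A = "set_pmf G1 \<union> set_pmf G2"
  have "finite ?A" and "\<forall>(m, S)\<in>?A. spd S"
    using assms(2,3) by (auto simp: finite_discrete_mix_def)
  then obtain C where C: "\<And>a w v. a \<in> ?A \<Longrightarrow> norm w = 1 \<Longrightarrow> norm v = 1 \<Longrightarrow> \<bar>proj_vw v w a\<bar> \<le> C"
    by (rule proj_vw_uniform_bound) blast+
  have "smix_wpp p G1 G2 \<le> ennreal ((2 * C) powr p)"
  proof (rule smix_wpp_le)
    fix w :: "real^2" and v :: "real^'n" assume "norm w = 1" "norm v = 1"
    then show "wass_pp p (map_pmf (proj_vw v w) G1) (map_pmf (proj_vw v w) G2) \<le> (2 * C) powr p"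
      using assms(1) by (intro wass_pp_le_bounded_support) (auto intro: C)
  qed
  then show ?thesis by (rule le_less_trans) simp
qed

end
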